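(* Suppose a randomized learning algorithm $A$ is $\beta$-pointwise hypothesis stable with respect to an $M$-bounded loss $\ell$ and a fixed prior $P$ on $\Theta$. Then for any $n\ge1$ and $\delta\in(0,1)$, with probability at least $1-\delta$ over draws of $S\sim\mathcal{D}^n$, every posterior $Q$ on $\Theta$ satisfies $$\Phi(S,Q)\le\sqrt{\Big(\frac{\chi^2(Q\|P)+1}{\delta}\Big)\Big(\frac{2M^2}{n}+12M\beta\Big)},$$ where $\chi^2(Q\|P)=\mathbb{E}_{\theta\sim P}\big[(Q(\theta)/P(\theta))^2-1\big]$.
   Context: Setting: $\mathcal{Z}=\mathcal{X}\times\mathcal{Y}$ with unknown distribution $\mathcal{D}$; $S=(z_1,\dots,z_n)$ i.i.d. from $\mathcal{D}$; $A:\mathcal{Z}^n\times\Theta\to\mathcal{H}$ deterministic with hyperparameters $\theta\in\Theta$; $\ell:\mathcal{H}\times\mathcal{Z}\to[0,M]$. Risk $R(S,\theta)=\mathbb{E}_{z\sim\mathcal{D}}\ell(A(S,\theta),z)$, empirical risk $\hat R(S,\theta)=\frac1n\sum_i\ell(A(S,\theta),z_i)$, $\Phi(S,\theta)=R(S,\theta)-\hat R(S,\theta)$, and for a distribution $Q$ on $\Theta$, $\Phi(S,Q)=\mathbb{E}_{\theta\sim Q}\Phi(S,\theta)$. Posteriors $Q$ may depend on $S$; $Q(\theta)/P(\theta)$ denotes the density ratio (the $\chi^2$ divergence is $+\infty$ if $Q$ is not absolutely continuous w.r.t. $P$). $\beta$-pointwise hypothesis stability w.r.t. $\ell$ and $P$: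 with $S^{i,z}$ denoting $S$ with the $i$-th example replaced by $z$, $\sup_{i\in\{1,\dots,n\}}\mathbb{E}_{S\sim\mathcal{D}^n}\mathbb{E}_{z\sim\mathcal{D}}\mathbb{E}_{\theta\sim P}\big[|\ell(A(S,\theta),z_i)-\ell(A(S^{i,z},\theta),z_i)|\big]\le\beta$. *)

theory Defs
  imports "HOL-Probability.Probability"
begin

definition sample_measure :: "nat \<Rightarrow> 'z measure \<Rightarrow> (nat \<Rightarrow> 'z) measure" where
  "sample_measure n D = PiM {..<n} (\<lambda>_. D)"

definition risk :: "'z measure \<Rightarrow> ('h \<Rightarrow> 'z \<Rightarrow> real) \<Rightarrow> ((nat \<Rightarrow> 'z) \<Rightarrow> 'p \<Rightarrow> 'h)
    \<Rightarrow> (nat \<Rightarrow> 'z) \<Rightarrow> 'p \<Rightarrow> real" where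
  "risk D loss A S \<theta> = (\<integral>z. loss (A S \<theta>) z \<partial>D)"

definition emp_risk :: "nat \<Rightarrow> ('h \<Rightarrow> 'z \<Rightarrow> real) \<Rightarrow> ((nat \<Rightarrow> 'z) \<Rightarrow> 'p \<Rightarrow> 'h)
    \<Rightarrow> (nat \<Rightarrow> 'z) \<Rightarrow> 'p \<Rightarrow> real" where
  "emp_risk n loss A S \<theta> = (1 / real n) * (\<Sum>i<n. loss (A S \<theta>) (S i))"

definition gen_gap :: "nat \<Rightarrow> 'z measure \<Rightarrow> ('h \<Rightarrow> 'z \<Rightarrow> real) \<Rightarrow> ((nat \<Rightarrow> 'z) \<Rightarrow> 'p \<Rightarrow> 'h)
    \<Rightarrow> (nat \<Rightarrow> 'z) \<Rightarrow> 'p \<Rightarrow> real" where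
  "gen_gap n D loss A S \<theta> = risk D loss A S \<theta> - emp_risk n loss A S \<theta>"

definition gen_gap_post :: "nat \<Rightarrow> 'z measure \<Rightarrow> ('h \<Rightarrow> 'z \<Rightarrow> real) \<Rightarrow> ((nat \<Rightarrow> 'z) \<Rightarrow> 'p \<Rightarrow> 'h)
    \<Rightarrow> (nat \<Rightarrow> 'z) \<Rightarrow> 'p measure \<Rightarrow> real" where
  "gen_gap_post n D loss A S Q = (\<integral>\<theta>. gen_gap n D loss A S \<theta> \<partial>Q)"

definition pointwise_hyp_stable :: "nat \<Rightarrow> 'z measure \<Rightarrow> 'p measure \<Rightarrow> ('h \<Rightarrow> 'z \<Rightarrow> real)
    \<Rightarrow> ((nat \<Rightarrow> 'z) \<Rightarrow> 'p \<Rightarrow> 'h) \<Rightarrow> real \<Rightarrow> bool" where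
  "pointwise_hyp_stable n D P loss A \<beta> \<longleftrightarrow>
     (\<forall>i<n. (\<integral>S. (\<integral>z. (\<integral>\<theta>. \<bar>loss (A S \<theta>) (S i) - loss (A (S(i := z)) \<theta>) (S i)\<bar> \<partial>P) \<partial>D)
               \<partial>sample_measure n D) \<le> \<beta>)"

definition chi_square :: "'p measure \<Rightarrow> 'p measure \<Rightarrow> ereal" where
  "chi_square Q P =
     (if absolutely_continuous P Q
      then enn2ereal (\<integral>\<^sup>+ \<theta>. (RN_deriv P Q \<theta>)\<^sup>2 \<partial>P) - 1
      else \<infinity>)"

end

theory Submission
  imports Defs
begin

text \<open>Fix the hyperparameter \<theta> and write \<Phi>(S, \<theta>) = (1/n) \<Sum>i. (R(S) - \<ell>(S, z_i)). Expanding
  the square, the diagonal terms contribute at most M^2/n. An off-diagonal term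
  E[(R(S) - \<ell>(S, z_j)) (R(S) - \<ell>(S, z_k))] is compared with the same quantity for samples in which
  z_j and z_k are replaced by fresh points: replacing one coordinate by an independent copy does not
  change the law of the sample, so for the resampled sample the training points behave like test
  points and the term vanishes, while every replacement costs a multiple of the stability
  coefficient. Averaging over \<theta> ~ P gives E_S E_P \<Phi>^2 \<le> M^2/n + 12 M \<beta>. Markov's inequality
  selects the samples with E_P \<Phi>(S, -)^2 \<le> (2 M^2/n + 12 M \<beta>)/\<delta>, and for such a sample every
  posterior is handled at once by writing \<Phi>(S, Q) = E_P[(dQ/dP) \<Phi>(S, -)] and applying the
  Cauchy-Schwarz inequality, since E_P[(dQ/dP)^2] = \<chi>^2(Q || P) + 1.\<close>

lemma integrable_bounded:
  fixes f :: "'a \<Rightarrow> real"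
  assumes "finite_measure N" "f \<in> borel_measurable N" "\<And>x. x \<in> space N \<Longrightarrow> \<bar>f x\<bar> \<le> C"
  shows "integrable N f"
  using assms by (intro finite_measure.integrable_const_bound[where B=C]) auto

lemma (in prob_space) abs_integral_le_bound:
  fixes f :: "'a \<Rightarrow> real"
  assumes "\<And>x. \<bar>f x\<bar> \<le> C"
  shows "\<bar>\<integral>x. f x \<partial>M\<bar> \<le> C"
proof -
  have "0 \<le> C" using assms[of undefined] by linarith
  have "\<bar>\<integral>x. f x \<partial>M\<bar> \<le> (\<integral>x. \<bar>f x\<bar> \<partial>M)" by (rule integral_abs_bound)
  also have "\<dots> \<le> (\<integral>x. C \<partial>M)"
    by (intro integral_mono_AE') (auto simp: assms \<open>0 \<le> C\<close>)
  also have "\<dots> = C" by (simp add: prob_space)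
  finally show ?thesis .
qed

lemma (in prob_space) Markov_lower_prob:
  fixes W :: "'a \<Rightarrow> real"
  assumes W: "integrable M W" "\<And>x. 0 \<le> W x" and EW: "expectation W \<le> B" and \<delta>: "0 < \<delta>"
  shows "1 - \<delta> \<le> prob {x \<in> space M. W x \<le> B / \<delta>}"
proof -
  have [measurable]: "W \<in> borel_measurable M" using W(1) by (rule borel_measurable_integrable)
  have "0 \<le> expectation W" using W(2) by (simp add: integral_nonneg_AE)
  show ?thesis
  proof (cases "B = 0")
    case True
    then have "expectation W = 0" using EW \<open>0 \<le> expectation W\<close> by simp
    then have "AE x in M. W x = 0" using integral_nonneg_eq_0_iff_AE W by blast
    then have "prob {x \<in> space M. W x \<le> B / \<delta>} = 1"
      using True by (subst prob_Collect_eq_1) (auto elim: eventually_mono)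
    then show ?thesis using \<delta> by simp
  next
    case False
    then have c: "0 < B / \<delta>" using EW \<open>0 \<le> expectation W\<close> \<delta> by simp
    have "prob {x \<in> space M. B / \<delta> \<le> W x} \<le> expectation W / (B / \<delta>)"
      by (rule integral_Markov_inequality_measure[OF W(1) sets.top]) (use W(2) c in auto)
    also have "\<dots> \<le> \<delta>"
      using EW c \<delta> by (simp add: divide_le_eq field_simps)
    finally have "prob {x \<in> space M. B / \<delta> \<le> W x} \<le> \<delta>" .
    moreover have "prob {x \<in> space M. W x < B / \<delta>} = 1 - prob {x \<in> space M. B / \<delta> \<le> W x}"
    proof -
      have "{x \<in> space M. W x < B / \<delta>} = space M - {x \<in> space M. B / \<delta> \<le> W x}" by auto
      then show ?thesis by (simp add: prob_compl)
    qed
    moreover have "prob {x \<in> space M. W x < B / \<delta>} \<le> prob {x \<in> space M. W x \<le> B / \<delta>}"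
      by (rule finite_measure_mono) auto
    ultimately show ?thesis by linarith
  qed
qed

lemma abs_mult_diff_le:
  fixes a b c d M :: real
  assumes "\<bar>b\<bar> \<le> M" "\<bar>c\<bar> \<le> M"
  shows "\<bar>a * b - c * d\<bar> \<le> M * \<bar>a - c\<bar> + M * \<bar>b - d\<bar>"
proof -
  have split: "a * b - c * d = (a - c) * b + c * (b - d)" by algebra
  have "\<bar>(a - c) * b\<bar> \<le> M * \<bar>a - c\<bar>"
    unfolding abs_mult using mult_right_mono[OF assms(1), of "\<bar>a - c\<bar>"] by (simp add: mult.commute)
  moreover have "\<bar>c * (b - d)\<bar> \<le> M * \<bar>b - d\<bar>"
    unfolding abs_mult using assms(2) by (simp add: mult_right_mono)
  ultimately show ?thesis unfolding split by (meson abs_triangle_ineq add_mono order_trans)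
qed

lemma Cauchy_Schwarz_integral:
  fixes f g :: "'a \<Rightarrow> real"
  assumes f2: "integrable M (\<lambda>x. (f x)\<^sup>2)" and g2: "integrable M (\<lambda>x. (g x)\<^sup>2)"
    and fg: "integrable M (\<lambda>x. f x * g x)"
  shows "(\<integral>x. f x * g x \<partial>M) \<le> sqrt ((\<integral>x. (f x)\<^sup>2 \<partial>M) * (\<integral>x. (g x)\<^sup>2 \<partial>M))"
proof -
  define a c where "a = (\<integral>x. (f x)\<^sup>2 \<partial>M)" and "c = (\<integral>x. (g x)\<^sup>2 \<partial>M)"
  have "0 \<le> a" "0 \<le> c" by (simp_all add: a_def c_def)
  show ?thesis
  proof (cases "a = 0 \<or> c = 0")
    case True
    then have "(AE x in M. (f x)\<^sup>2 = 0) \<or> (AE x in M. (g x)\<^sup>2 = 0)"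
      using f2 g2 by (auto simp: a_def c_def integral_nonneg_eq_0_iff_AE)
    then have "AE x in M. f x * g x = 0" by (auto elim: eventually_mono)
    then show ?thesis using \<open>0 \<le> a\<close> \<open>0 \<le> c\<close> by (simp add: integral_eq_zero_AE a_def c_def)
  next
    case False
    then have "0 < a" "0 < c" using \<open>0 \<le> a\<close> \<open>0 \<le> c\<close> by auto
    define l where "l = sqrt c / sqrt a"
    have "0 < l" using \<open>0 < a\<close> \<open>0 < c\<close> by (simp add: l_def)
    \<comment> \<open>AM-GM with the weight that balances the two sides\<close>
    have "(\<integral>x. f x * g x \<partial>M) \<le> (\<integral>x. (l * (f x)\<^sup>2 + (g x)\<^sup>2 / l) / 2 \<partial>M)"
    proof (rule integral_mono[OF fg])
      show "integrable M (\<lambda>x. (l * (f x)\<^sup>2 + (g x)\<^sup>2 / l) / 2)" using f2 g2 by simp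
      fix x
      have "0 \<le> (l * f x - g x)\<^sup>2 / l" using \<open>0 < l\<close> by simp
      also have "\<dots> = l * (f x)\<^sup>2 - 2 * (f x * g x) + (g x)\<^sup>2 / l"
        using \<open>0 < l\<close> by (simp add: power2_eq_square diff_divide_distrib add_divide_distrib algebra_simps)
      finally show "f x * g x \<le> (l * (f x)\<^sup>2 + (g x)\<^sup>2 / l) / 2" by simp
    qed
    also have "\<dots> = (l * a + c / l) / 2" using f2 g2 by (simp add: a_def c_def)
    also have "\<dots> = sqrt (a * c)"
    proof -
      have "l * a = sqrt a * sqrt c" "c / l = sqrt a * sqrt c"
        using \<open>0 < a\<close> \<open>0 < c\<close> by (simp_all add: l_def divide_simps)
      then show ?thesis by (simp add: real_sqrt_mult)
    qed
    finally show ?thesis by (simp add: a_def c_def)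
  qed
qed

lemma chi_square_change_of_measure:
  fixes g :: "'p \<Rightarrow> real"
  assumes P: "prob_space P" and Q: "prob_space Q" and sets_Q: "sets Q = sets P"
    and chi: "chi_square Q P < \<infinity>"
    and g: "g \<in> borel_measurable P" and g_bounded: "\<And>\<theta>. \<bar>g \<theta>\<bar> \<le> K"
    and c: "(\<integral>\<theta>. (g \<theta>)\<^sup>2 \<partial>P) \<le> c"
  shows "(\<integral>\<theta>. g \<theta> \<partial>Q) \<le> sqrt ((real_of_ereal (chi_square Q P) + 1) * c)"
proof -
  interpret P: prob_space P by (rule P)
  interpret Q: prob_space Q by (rule Q)
  have ac: "absolutely_continuous P Q"
    using chi by (auto simp: chi_square_def split: if_splits)
  have sf: "sigma_finite_measure Q" by (rule prob_space_imp_sigma_finite[OF Q])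
  define \<rho> where "\<rho> \<theta> = enn2real (RN_deriv P Q \<theta>)" for \<theta>
  have [measurable]: "\<rho> \<in> borel_measurable P" unfolding \<rho>_def by measurable
  define X where "X = (\<integral>\<^sup>+ \<theta>. (RN_deriv P Q \<theta>)\<^sup>2 \<partial>P)"
  have X_eq: "X = (\<integral>\<^sup>+ \<theta>. ennreal ((\<rho> \<theta>)\<^sup>2) \<partial>P)"
    unfolding X_def using P.RN_deriv_finite[OF sf ac sets_Q]
    by (intro nn_integral_cong_AE) (auto simp: \<rho>_def ennreal_power[symmetric] less_top elim!: eventually_mono)
  have X_finite: "X \<noteq> \<top>" using chi ac by (auto simp: chi_square_def X_def)
  have \<rho>2: "integrable P (\<lambda>\<theta>. (\<rho> \<theta>)\<^sup>2)"
    using X_eq X_finite by (intro integrableI_nonneg) (auto simp: less_top)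
  have chi_eq: "real_of_ereal (chi_square Q P) + 1 = (\<integral>\<theta>. (\<rho> \<theta>)\<^sup>2 \<partial>P)"
  proof -
    have "X = ennreal (\<integral>\<theta>. (\<rho> \<theta>)\<^sup>2 \<partial>P)"
      unfolding X_eq by (rule nn_integral_eq_integral[OF \<rho>2]) simp
    then show ?thesis using ac by (simp add: chi_square_def X_def[symmetric] one_ereal_def)
  qed
  have gQ: "integrable Q g"
    using g_bounded measurable_cong_sets[OF sets_Q refl] g
    by (intro integrable_bounded[OF Q.finite_measure_axioms, where C=K]) auto
  have \<rho>g: "integrable P (\<lambda>\<theta>. \<rho> \<theta> * g \<theta>)"
    using P.RN_deriv_integrable[OF sf ac sets_Q g] gQ by (simp add: \<rho>_def)
  have g2: "integrable P (\<lambda>\<theta>. (g \<theta>)\<^sup>2)"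
  proof (rule integrable_bounded[OF P.finite_measure_axioms, where C="K * K"])
    fix \<theta>
    have "\<bar>g \<theta>\<bar> * \<bar>g \<theta>\<bar> \<le> K * K" by (rule mult_mono) (use g_bounded[of \<theta>] in auto)
    then show "\<bar>(g \<theta>)\<^sup>2\<bar> \<le> K * K" by (simp add: power2_eq_square abs_mult)
  qed (use g in measurable)
  have "(\<integral>\<theta>. g \<theta> \<partial>Q) = (\<integral>\<theta>. \<rho> \<theta> * g \<theta> \<partial>P)"
    using P.RN_deriv_integral[OF sf ac sets_Q g] by (simp add: \<rho>_def)
  also have "\<dots> \<le> sqrt ((\<integral>\<theta>. (\<rho> \<theta>)\<^sup>2 \<partial>P) * (\<integral>\<theta>. (g \<theta>)\<^sup>2 \<partial>P))"
    by (rule Cauchy_Schwarz_integral[OF \<rho>2 g2 \<rho>g])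
  also have "\<dots> \<le> sqrt ((real_of_ereal (chi_square Q P) + 1) * c)"
    unfolding chi_eq by (intro real_sqrt_le_mono mult_left_mono c) simp
  finally show ?thesis .
qed

text \<open>For a fixed hyperparameter, L S z is the loss at z of the hypothesis learned from S.\<close>

locale bounded_sample_loss =
  fixes D :: "'z measure" and n :: nat and L :: "(nat \<Rightarrow> 'z) \<Rightarrow> 'z \<Rightarrow> real" and M :: real
  assumes prob_space_D: "prob_space D"
    and L_measurable: "case_prod L \<in> borel_measurable (PiM {..<n} (\<lambda>_. D) \<Otimes>\<^sub>M D)"
    and L_nonneg: "\<And>S z. 0 \<le> L S z" and L_le: "\<And>S z. L S z \<le> M"
begin

abbreviation "Dn \<equiv> PiM {..<n} (\<lambda>_. D)"

sublocale D: prob_space D by (rule prob_space_D)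
sublocale Dn: prob_space Dn by (rule prob_space_PiM) (use prob_space_D in auto)
sublocale D_D: prob_space "D \<Otimes>\<^sub>M D" by (rule prob_space_pair) unfold_locales
sublocale Dn_D: prob_space "Dn \<Otimes>\<^sub>M D" by (rule prob_space_pair) unfold_locales
sublocale Dn_DD: prob_space "Dn \<Otimes>\<^sub>M (D \<Otimes>\<^sub>M D)" by (rule prob_space_pair) unfold_locales
sublocale pair_D_D: pair_sigma_finite D D ..
sublocale pair_Dn_D: pair_sigma_finite Dn D ..
sublocale pair_Dn_DD: pair_sigma_finite Dn "D \<Otimes>\<^sub>M D" ..
sublocale product_D: product_sigma_finite "\<lambda>_. D" by unfold_locales

lemma L_measurable' [measurable (raw)]:
  "f \<in> measurable N Dn \<Longrightarrow> g \<in> measurable N D \<Longrightarrow> (\<lambda>x. L (f x) (g x)) \<in> borel_measurable N"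
  using measurable_compose[OF measurable_Pair L_measurable, of f N g] by simp

definition mean_loss :: "(nat \<Rightarrow> 'z) \<Rightarrow> real" where
  "mean_loss S = (\<integral>w. L S w \<partial>D)"

lemma mean_loss_measurable [measurable (raw)]:
  "f \<in> measurable N Dn \<Longrightarrow> (\<lambda>x. mean_loss (f x)) \<in> borel_measurable N"
  using measurable_compose[of f N Dn mean_loss] D.borel_measurable_lebesgue_integral[OF L_measurable]
  by (simp add: mean_loss_def[abs_def])

lemma M_nonneg: "0 \<le> M" using L_nonneg L_le order_trans by blast

lemma abs_L_le [simp]: "\<bar>L S z\<bar> \<le> M" "\<bar>L S z - L T w\<bar> \<le> M"
  using L_nonneg[of S z] L_le[of S z] L_nonneg[of T w] L_le[of T w] by auto

lemma abs_L_diff_add_le [simp]: "\<bar>L S z - L T w\<bar> + \<bar>L S' z' - L T' w'\<bar> \<le> 2 * M"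
  using abs_L_le(2)[of S z T w] abs_L_le(2)[of S' z' T' w'] by linarith

lemma mean_loss_bounds: "0 \<le> mean_loss S" "mean_loss S \<le> M"
  using D.abs_integral_le_bound[of "L S" M] L_nonneg L_le
  by (auto simp: mean_loss_def integral_nonneg_AE)

lemma abs_mean_loss_le [simp]:
  "\<bar>mean_loss S\<bar> \<le> M" "\<bar>mean_loss S - mean_loss T\<bar> \<le> M" "\<bar>mean_loss S - L T w\<bar> \<le> M"
  using mean_loss_bounds[of S] mean_loss_bounds[of T] L_nonneg[of T w] L_le[of T w] by auto

lemma abs_mult_le [simp]:
  "\<bar>L S z * L T w\<bar> \<le> M * M" "\<bar>mean_loss S * L T w\<bar> \<le> M * M" "\<bar>mean_loss S * mean_loss T\<bar> \<le> M * M"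
  unfolding abs_mult by (rule mult_mono; simp add: M_nonneg)+

lemma integrable_L: "S \<in> space Dn \<Longrightarrow> integrable D (L S)"
  by (rule integrable_bounded[OF D.finite_measure_axioms, where C=M]) auto

lemma integral_nested_pair:
  fixes g :: "(nat \<Rightarrow> 'z) \<Rightarrow> 'z \<Rightarrow> real"
  assumes "(\<lambda>x. g (fst x) (snd x)) \<in> borel_measurable (Dn \<Otimes>\<^sub>M D)" and "\<And>S u. \<bar>g S u\<bar> \<le> C"
  shows "(\<integral>S. \<integral>u. g S u \<partial>D \<partial>Dn) = (\<integral>x. g (fst x) (snd x) \<partial>(Dn \<Otimes>\<^sub>M D))"
proof -
  have "integrable (Dn \<Otimes>\<^sub>M D) (\<lambda>x. g (fst x) (snd x))"
    by (rule integrable_bounded[OF Dn_D.finite_measure_axioms assms(1)]) (rule assms(2))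
  from pair_Dn_D.integral_fst'[OF this] show ?thesis by simp
qed

lemma integral_nested_triple:
  fixes g :: "(nat \<Rightarrow> 'z) \<Rightarrow> 'z \<Rightarrow> 'z \<Rightarrow> real"
  assumes g: "(\<lambda>x. g (fst x) (fst (snd x)) (snd (snd x))) \<in> borel_measurable (Dn \<Otimes>\<^sub>M (D \<Otimes>\<^sub>M D))"
    and g_bounded: "\<And>S u v. \<bar>g S u v\<bar> \<le> C"
  shows "(\<integral>S. \<integral>u. \<integral>v. g S u v \<partial>D \<partial>D \<partial>Dn)
    = (\<integral>x. g (fst x) (fst (snd x)) (snd (snd x)) \<partial>(Dn \<Otimes>\<^sub>M (D \<Otimes>\<^sub>M D)))"
proof -
  have "(\<integral>S. \<integral>u. \<integral>v. g S u v \<partial>D \<partial>D \<partial>Dn) = (\<integral>S. \<integral>p. g S (fst p) (snd p) \<partial>(D \<Otimes>\<^sub>M D) \<partial>Dn)"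
  proof (rule Bochner_Integration.integral_cong[OF refl])
    fix S assume "S \<in> space Dn"
    then have "(\<lambda>p. g S (fst p) (snd p)) \<in> borel_measurable (D \<Otimes>\<^sub>M D)"
      using measurable_compose[OF measurable_Pair[OF measurable_const measurable_ident_sets[OF refl]] g]
      by simp
    then have "integrable (D \<Otimes>\<^sub>M D) (\<lambda>p. g S (fst p) (snd p))"
      by (rule integrable_bounded[OF D_D.finite_measure_axioms]) (rule g_bounded)
    from pair_D_D.integral_fst'[OF this]
    show "(\<integral>u. \<integral>v. g S u v \<partial>D \<partial>D) = (\<integral>p. g S (fst p) (snd p) \<partial>(D \<Otimes>\<^sub>M D))" by simp
  qed
  also have "\<dots> = (\<integral>x. g (fst x) (fst (snd x)) (snd (snd x)) \<partial>(Dn \<Otimes>\<^sub>M (D \<Otimes>\<^sub>M D)))"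
  proof -
    have "integrable (Dn \<Otimes>\<^sub>M (D \<Otimes>\<^sub>M D)) (\<lambda>x. g (fst x) (fst (snd x)) (snd (snd x)))"
      by (rule integrable_bounded[OF Dn_DD.finite_measure_axioms g]) (rule g_bounded)
    from pair_Dn_DD.integral_fst'[OF this] show ?thesis by simp
  qed
  finally show ?thesis .
qed

lemma integral_nested_swap_inner:
  fixes g :: "(nat \<Rightarrow> 'z) \<Rightarrow> 'z \<Rightarrow> 'z \<Rightarrow> real"
  assumes g: "(\<lambda>x. g (fst x) (fst (snd x)) (snd (snd x))) \<in> borel_measurable (Dn \<Otimes>\<^sub>M (D \<Otimes>\<^sub>M D))"
    and g_bounded: "\<And>S u v. \<bar>g S u v\<bar> \<le> C"
  shows "(\<integral>S. \<integral>u. \<integral>v. g S u v \<partial>D \<partial>D \<partial>Dn) = (\<integral>S. \<integral>v. \<integral>u. g S u v \<partial>D \<partial>D \<partial>Dn)"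
proof (rule Bochner_Integration.integral_cong[OF refl])
  fix S assume "S \<in> space Dn"
  then have "(\<lambda>p. g S (fst p) (snd p)) \<in> borel_measurable (D \<Otimes>\<^sub>M D)"
    using measurable_compose[OF measurable_Pair[OF measurable_const measurable_ident_sets[OF refl]] g]
    by simp
  then have "integrable (D \<Otimes>\<^sub>M D) (\<lambda>p. g S (fst p) (snd p))"
    by (rule integrable_bounded[OF D_D.finite_measure_axioms]) (rule g_bounded)
  then have "integrable (D \<Otimes>\<^sub>M D) (\<lambda>(u, v). g S u v)" by (simp add: split_beta')
  from pair_D_D.Fubini_integral[OF this]
  show "(\<integral>u. \<integral>v. g S u v \<partial>D \<partial>D) = (\<integral>v. \<integral>u. g S u v \<partial>D \<partial>D)" by simp
qed

lemma integral_nested_pair_mono: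
  fixes g h :: "(nat \<Rightarrow> 'z) \<Rightarrow> 'z \<Rightarrow> real"
  assumes g: "(\<lambda>x. g (fst x) (snd x)) \<in> borel_measurable (Dn \<Otimes>\<^sub>M D)" "\<And>S u. \<bar>g S u\<bar> \<le> C"
    and h: "(\<lambda>x. h (fst x) (snd x)) \<in> borel_measurable (Dn \<Otimes>\<^sub>M D)" "\<And>S u. \<bar>h S u\<bar> \<le> C'"
    and le: "\<And>S u. S \<in> space Dn \<Longrightarrow> u \<in> space D \<Longrightarrow> g S u \<le> h S u"
  shows "(\<integral>S. \<integral>u. g S u \<partial>D \<partial>Dn) \<le> (\<integral>S. \<integral>u. h S u \<partial>D \<partial>Dn)"
  unfolding integral_nested_pair[OF g] integral_nested_pair[OF h]
  by (rule integral_mono)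
    (auto intro: integrable_bounded[OF Dn_D.finite_measure_axioms] g h le simp: space_pair_measure)

lemma integral_nested_pair_add:
  fixes g h :: "(nat \<Rightarrow> 'z) \<Rightarrow> 'z \<Rightarrow> real"
  assumes g: "(\<lambda>x. g (fst x) (snd x)) \<in> borel_measurable (Dn \<Otimes>\<^sub>M D)" "\<And>S u. \<bar>g S u\<bar> \<le> C"
    and h: "(\<lambda>x. h (fst x) (snd x)) \<in> borel_measurable (Dn \<Otimes>\<^sub>M D)" "\<And>S u. \<bar>h S u\<bar> \<le> C'"
  shows "(\<integral>S. \<integral>u. g S u + h S u \<partial>D \<partial>Dn) = (\<integral>S. \<integral>u. g S u \<partial>D \<partial>Dn) + (\<integral>S. \<integral>u. h S u \<partial>D \<partial>Dn)"
proof -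
  have gh: "(\<lambda>x. g (fst x) (snd x) + h (fst x) (snd x)) \<in> borel_measurable (Dn \<Otimes>\<^sub>M D)"
    "\<bar>g S u + h S u\<bar> \<le> C + C'" for S u
    using g h g(2)[of S u] h(2)[of S u] by (measurable, linarith)
  show ?thesis
    unfolding integral_nested_pair[OF g] integral_nested_pair[OF h]
      integral_nested_pair[where g="\<lambda>S u. g S u + h S u", OF gh]
    by (rule Bochner_Integration.integral_add)
      (auto intro: integrable_bounded[OF Dn_D.finite_measure_axioms] g h)
qed

lemma integral_nested_triple_mono:
  fixes g h :: "(nat \<Rightarrow> 'z) \<Rightarrow> 'z \<Rightarrow> 'z \<Rightarrow> real"
  assumes g: "(\<lambda>x. g (fst x) (fst (snd x)) (snd (snd x))) \<in> borel_measurable (Dn \<Otimes>\<^sub>M (D \<Otimes>\<^sub>M D))"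
      "\<And>S u v. \<bar>g S u v\<bar> \<le> C"
    and h: "(\<lambda>x. h (fst x) (fst (snd x)) (snd (snd x))) \<in> borel_measurable (Dn \<Otimes>\<^sub>M (D \<Otimes>\<^sub>M D))"
      "\<And>S u v. \<bar>h S u v\<bar> \<le> C'"
    and le: "\<And>S u v. g S u v \<le> h S u v"
  shows "(\<integral>S. \<integral>u. \<integral>v. g S u v \<partial>D \<partial>D \<partial>Dn) \<le> (\<integral>S. \<integral>u. \<integral>v. h S u v \<partial>D \<partial>D \<partial>Dn)"
  unfolding integral_nested_triple[OF g] integral_nested_triple[OF h]
  by (rule integral_mono) (auto intro: integrable_bounded[OF Dn_DD.finite_measure_axioms] g h le)

lemma integral_nested_triple_add:
  fixes g h :: "(nat \<Rightarrow> 'z) \<Rightarrow> 'z \<Rightarrow> 'z \<Rightarrow> real"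
  assumes g: "(\<lambda>x. g (fst x) (fst (snd x)) (snd (snd x))) \<in> borel_measurable (Dn \<Otimes>\<^sub>M (D \<Otimes>\<^sub>M D))"
      "\<And>S u v. \<bar>g S u v\<bar> \<le> C"
    and h: "(\<lambda>x. h (fst x) (fst (snd x)) (snd (snd x))) \<in> borel_measurable (Dn \<Otimes>\<^sub>M (D \<Otimes>\<^sub>M D))"
      "\<And>S u v. \<bar>h S u v\<bar> \<le> C'"
  shows "(\<integral>S. \<integral>u. \<integral>v. g S u v + h S u v \<partial>D \<partial>D \<partial>Dn)
    = (\<integral>S. \<integral>u. \<integral>v. g S u v \<partial>D \<partial>D \<partial>Dn) + (\<integral>S. \<integral>u. \<integral>v. h S u v \<partial>D \<partial>D \<partial>Dn)"
proof -
  have gh: "(\<lambda>x. g (fst x) (fst (snd x)) (snd (snd x)) + h (fst x) (fst (snd x)) (snd (snd x)))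
      \<in> borel_measurable (Dn \<Otimes>\<^sub>M (D \<Otimes>\<^sub>M D))"
    "\<bar>g S u v + h S u v\<bar> \<le> C + C'" for S u v
    using g h g(2)[of S u v] h(2)[of S u v] by (measurable, linarith)
  show ?thesis
    unfolding integral_nested_triple[OF g] integral_nested_triple[OF h]
      integral_nested_triple[where g="\<lambda>S u v. g S u v + h S u v", OF gh]
    by (rule Bochner_Integration.integral_add)
      (auto intro: integrable_bounded[OF Dn_DD.finite_measure_axioms] g h)
qed

definition sensitivity :: "nat \<Rightarrow> real" where
  "sensitivity i = (\<integral>S. \<integral>z. \<bar>L S (S i) - L (S(i := z)) (S i)\<bar> \<partial>D \<partial>Dn)"

lemma sensitivity_nonneg: "0 \<le> sensitivity i"
  unfolding sensitivity_def by (intro integral_nonneg_AE AE_I2) simp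

context
  fixes i assumes i: "i < n"
begin

lemma update_measurable [measurable (raw)]:
  "f \<in> measurable N Dn \<Longrightarrow> h \<in> measurable N D \<Longrightarrow> (\<lambda>x. (f x)(i := h x)) \<in> measurable N Dn"
  using i by (intro measurable_fun_upd[where J="{..<n}"]) auto

lemma index_in [simp]: "i \<in> {..<n}" "i < n" using i by auto

lemma integral_resample_coordinate:
  fixes H :: "(nat \<Rightarrow> 'z) \<Rightarrow> 'z \<Rightarrow> real"
  assumes H: "(\<lambda>x. H (fst x) (snd x)) \<in> borel_measurable (Dn \<Otimes>\<^sub>M D)"
    and H_bounded: "\<And>S u. \<bar>H S u\<bar> \<le> C"
  shows "(\<integral>S. \<integral>u. H (S(i := u)) (S i) \<partial>D \<partial>Dn) = (\<integral>S. \<integral>u. H S u \<partial>D \<partial>Dn)"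
proof -
  have [measurable]: "case_prod H \<in> borel_measurable (Dn \<Otimes>\<^sub>M D)"
    using H by (simp add: split_beta')
  define I where "I = {..<n} - {i}"
  have I: "insert i I = {..<n}" "i \<notin> I" "finite I" by (auto simp: I_def)
  have resampled: "integrable Dn (\<lambda>S. \<integral>u. H (S(i := u)) (S i) \<partial>D)"
    by (rule integrable_bounded[OF Dn.finite_measure_axioms, where C=C], measurable)
      (rule D.abs_integral_le_bound, rule H_bounded)
  have fresh: "integrable Dn (\<lambda>S. \<integral>u. H S u \<partial>D)"
    by (rule integrable_bounded[OF Dn.finite_measure_axioms, where C=C], measurable)
      (rule D.abs_integral_le_bound, rule H_bounded)
  \<comment> \<open>split off coordinate i, then exchange the old value of S i with the fresh u by Fubini\<close>
  have "(\<integral>S. \<integral>u. H (S(i := u)) (S i) \<partial>D \<partial>Dn)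
      = (\<integral>S. \<integral>y. \<integral>u. H (S(i := u)) y \<partial>D \<partial>D \<partial>PiM I (\<lambda>_. D))"
    using product_D.product_integral_insert[OF I(3,2), unfolded I(1), OF resampled] by simp
  also have "\<dots> = (\<integral>S. \<integral>y. \<integral>u. H (S(i := y)) u \<partial>D \<partial>D \<partial>PiM I (\<lambda>_. D))"
  proof (rule Bochner_Integration.integral_cong[OF refl])
    fix S assume S: "S \<in> space (PiM I (\<lambda>_. D))"
    have [measurable]: "(\<lambda>u. S(i := u)) \<in> measurable D Dn"
      using measurable_component_update[OF S I(2)] unfolding I(1) .
    have "integrable (D \<Otimes>\<^sub>M D) (\<lambda>(y, u). H (S(i := u)) y)"
      by (rule integrable_bounded[OF D_D.finite_measure_axioms, where C=C]) (auto intro: H_bounded)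
    from pair_D_D.Fubini_integral[OF this]
    show "(\<integral>y. \<integral>u. H (S(i := u)) y \<partial>D \<partial>D) = (\<integral>y. \<integral>u. H (S(i := y)) u \<partial>D \<partial>D)"
      by simp
  qed
  also have "\<dots> = (\<integral>S. \<integral>u. H S u \<partial>D \<partial>Dn)"
    using product_D.product_integral_insert[OF I(3,2), unfolded I(1), OF fresh] by simp
  finally show ?thesis .
qed

lemma loss_diff_resample_le:
  "(\<integral>S. \<integral>u. \<integral>w. \<bar>L S w - L (S(i := u)) w\<bar> \<partial>D \<partial>D \<partial>Dn) \<le> 2 * sensitivity i"
proof -
  \<comment> \<open>triangle inequality through S(i := w); by exchangeability both legs have mean sensitivity i\<close>
  have via_w: "(\<integral>S. \<integral>u. \<integral>w. \<bar>L S w - L (S(i := w)) w\<bar> \<partial>D \<partial>D \<partial>Dn) = sensitivity i"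
  proof -
    have "sensitivity i = (\<integral>S. \<integral>u. (\<lambda>T w. \<bar>L (T(i := w)) w - L T w\<bar>) (S(i := u)) (S i) \<partial>D \<partial>Dn)"
      unfolding sensitivity_def by (simp add: abs_minus_commute)
    also have "\<dots> = (\<integral>S. \<integral>u. \<bar>L (S(i := u)) u - L S u\<bar> \<partial>D \<partial>Dn)"
      by (rule integral_resample_coordinate[where C=M]) auto
    also have "\<dots> = (\<integral>S. \<integral>u. \<integral>w. \<bar>L S w - L (S(i := w)) w\<bar> \<partial>D \<partial>D \<partial>Dn)"
      by (simp add: abs_minus_commute D.prob_space)
    finally show ?thesis ..
  qed
  have from_w: "(\<integral>S. \<integral>u. \<integral>w. \<bar>L (S(i := w)) w - L (S(i := u)) w\<bar> \<partial>D \<partial>D \<partial>Dn) = sensitivity i"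
  proof -
    have "(\<integral>S. \<integral>u. \<integral>w. \<bar>L (S(i := w)) w - L (S(i := u)) w\<bar> \<partial>D \<partial>D \<partial>Dn)
        = (\<integral>S. \<integral>w. (\<lambda>T y. \<integral>u. \<bar>L T (T i) - L (T(i := u)) (T i)\<bar> \<partial>D) (S(i := w)) (S i) \<partial>D \<partial>Dn)"
      by (subst integral_nested_swap_inner[where C=M]) auto
    also have "\<dots> = sensitivity i"
      by (subst integral_resample_coordinate[where C=M])
        (measurable, rule D.abs_integral_le_bound, simp, simp add: sensitivity_def D.prob_space)
    finally show ?thesis .
  qed
  have "(\<integral>S. \<integral>u. \<integral>w. \<bar>L S w - L (S(i := u)) w\<bar> \<partial>D \<partial>D \<partial>Dn)
      \<le> (\<integral>S. \<integral>u. \<integral>w. \<bar>L S w - L (S(i := w)) w\<bar> + \<bar>L (S(i := w)) w - L (S(i := u)) w\<bar> \<partial>D \<partial>D \<partial>Dn)"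
    by (rule integral_nested_triple_mono[where C=M and C'="2 * M"]) auto
  also have "\<dots> = (\<integral>S. \<integral>u. \<integral>w. \<bar>L S w - L (S(i := w)) w\<bar> \<partial>D \<partial>D \<partial>Dn)
      + (\<integral>S. \<integral>u. \<integral>w. \<bar>L (S(i := w)) w - L (S(i := u)) w\<bar> \<partial>D \<partial>D \<partial>Dn)"
    by (rule integral_nested_triple_add[where C=M and C'=M]) auto
  finally show ?thesis unfolding via_w from_w by simp
qed

lemma mean_loss_diff_resample_le:
  "(\<integral>S. \<integral>u. \<bar>mean_loss S - mean_loss (S(i := u))\<bar> \<partial>D \<partial>Dn) \<le> 2 * sensitivity i"
proof -
  have "(\<integral>S. \<integral>u. \<bar>mean_loss S - mean_loss (S(i := u))\<bar> \<partial>D \<partial>Dn)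
      \<le> (\<integral>S. \<integral>u. \<integral>w. \<bar>L S w - L (S(i := u)) w\<bar> \<partial>D \<partial>D \<partial>Dn)"
  proof (rule integral_nested_pair_mono[where C=M and C'=M])
    fix S u assume S: "S \<in> space Dn" and u: "u \<in> space D"
    then have "S(i := u) \<in> space Dn"
      using measurable_space[OF update_measurable[OF measurable_const measurable_ident_sets[OF refl]]]
      by blast
    then have "mean_loss S - mean_loss (S(i := u)) = (\<integral>w. L S w - L (S(i := u)) w \<partial>D)"
      unfolding mean_loss_def using integrable_L S by simp
    then show "\<bar>mean_loss S - mean_loss (S(i := u))\<bar> \<le> (\<integral>w. \<bar>L S w - L (S(i := u)) w\<bar> \<partial>D)"
      by (simp add: integral_abs_bound)
  next
    show "(\<lambda>x. \<bar>mean_loss (fst x) - mean_loss ((fst x)(i := snd x))\<bar>) \<in> borel_measurable (Dn \<Otimes>\<^sub>M D)"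
      by measurable
  next
    show "(\<lambda>x. \<integral>w. \<bar>L (fst x) w - L ((fst x)(i := snd x)) w\<bar> \<partial>D) \<in> borel_measurable (Dn \<Otimes>\<^sub>M D)"
      by measurable
  qed (rule D.abs_integral_le_bound, simp | simp)+
  then show ?thesis using loss_diff_resample_le by linarith
qed

lemma mean_loss_sq_le:
  "(\<integral>S. mean_loss S * mean_loss S \<partial>Dn) \<le> (\<integral>S. mean_loss S * L S (S i) \<partial>Dn) + 3 * M * sensitivity i"
proof -
  have weight_bound: "\<bar>M * (\<bar>mean_loss S - mean_loss T\<bar> + \<bar>L S (S i) - L T (S i)\<bar>)\<bar> \<le> M * (2 * M)"
    for S T
  proof -
    have "\<bar>mean_loss S - mean_loss T\<bar> + \<bar>L S (S i) - L T (S i)\<bar> \<le> 2 * M"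
      using abs_mean_loss_le(2)[of S T] abs_L_le(2)[of S "S i" T "S i"] by linarith
    then show ?thesis by (simp add: abs_mult M_nonneg mult_left_mono)
  qed
  have bound: "\<bar>mean_loss S * L S (S i) + M * (\<bar>mean_loss S - mean_loss T\<bar> + \<bar>L S (S i) - L T (S i)\<bar>)\<bar>
      \<le> M * M + M * (2 * M)" for S T
    by (intro order_trans[OF abs_triangle_ineq] add_mono abs_mult_le weight_bound)
  have "(\<integral>S. mean_loss S * mean_loss S \<partial>Dn) = (\<integral>S. \<integral>u. (\<lambda>T w. mean_loss T * L T w) S u \<partial>D \<partial>Dn)"
    by (simp add: mean_loss_def)
  \<comment> \<open>S i is a fresh test point for the sample S(i := u)\<close>
  also have "\<dots> = (\<integral>S. \<integral>u. mean_loss (S(i := u)) * L (S(i := u)) (S i) \<partial>D \<partial>Dn)"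
    by (rule integral_resample_coordinate[where C="M * M", symmetric]) measurable
  also have "\<dots> \<le> (\<integral>S. \<integral>u. mean_loss S * L S (S i)
      + M * (\<bar>mean_loss S - mean_loss (S(i := u))\<bar> + \<bar>L S (S i) - L (S(i := u)) (S i)\<bar>) \<partial>D \<partial>Dn)"
  proof (rule integral_nested_pair_mono[where C="M * M" and C'="M * M + M * (2 * M)"])
    fix S u
    have "\<bar>mean_loss S * L S (S i) - mean_loss (S(i := u)) * L (S(i := u)) (S i)\<bar>
        \<le> M * \<bar>mean_loss S - mean_loss (S(i := u))\<bar> + M * \<bar>L S (S i) - L (S(i := u)) (S i)\<bar>"
      by (rule abs_mult_diff_le) simp_all
    then show "mean_loss (S(i := u)) * L (S(i := u)) (S i) \<le> mean_loss S * L S (S i)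
        + M * (\<bar>mean_loss S - mean_loss (S(i := u))\<bar> + \<bar>L S (S i) - L (S(i := u)) (S i)\<bar>)"
      by (simp add: algebra_simps abs_le_iff)
  qed (measurable, rule bound)
  also have "\<dots> = (\<integral>S. \<integral>u. mean_loss S * L S (S i) \<partial>D \<partial>Dn)
      + (\<integral>S. \<integral>u. M * (\<bar>mean_loss S - mean_loss (S(i := u))\<bar> + \<bar>L S (S i) - L (S(i := u)) (S i)\<bar>) \<partial>D \<partial>Dn)"
    by (rule integral_nested_pair_add[OF _ abs_mult_le(2) _ weight_bound]; measurable)
  also have "(\<integral>S. \<integral>u. M * (\<bar>mean_loss S - mean_loss (S(i := u))\<bar> + \<bar>L S (S i) - L (S(i := u)) (S i)\<bar>) \<partial>D \<partial>Dn)
      = M * ((\<integral>S. \<integral>u. \<bar>mean_loss S - mean_loss (S(i := u))\<bar> \<partial>D \<partial>Dn) + sensitivity i)"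
    unfolding sensitivity_def integral_mult_right_zero
    by (subst integral_nested_pair_add[where C=M and C'=M]; measurable?; simp)
  also have "(\<integral>S. \<integral>u. mean_loss S * L S (S i) \<partial>D \<partial>Dn)
      + M * ((\<integral>S. \<integral>u. \<bar>mean_loss S - mean_loss (S(i := u))\<bar> \<partial>D \<partial>Dn) + sensitivity i)
      \<le> (\<integral>S. mean_loss S * L S (S i) \<partial>Dn) + M * (2 * sensitivity i + sensitivity i)"
    using mult_left_mono[OF mean_loss_diff_resample_le M_nonneg] by (simp add: D.prob_space algebra_simps)
  finally show ?thesis by (simp add: algebra_simps)
qed

end


text \<open>Exported with the premise i < n, the simp rule i < n of the context above would loop.\<close>

declare index_in [simp del]

context
  fixes j k assumes j: "j < n" and k: "k < n" and jk: "j \<noteq> k"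
begin

lemma indices_in [simp]: "j \<in> {..<n}" "k \<in> {..<n}" "j < n" "k < n" using j k by auto

lemma integral_resample_two:
  "(\<integral>S. \<integral>u. \<integral>v. L (S(j := u, k := v)) (S j) * L (S(j := u, k := v)) (S k) \<partial>D \<partial>D \<partial>Dn)
    = (\<integral>S. mean_loss S * mean_loss S \<partial>Dn)"
proof -
  have "(\<integral>S. \<integral>u. \<integral>v. L (S(j := u, k := v)) (S j) * L (S(j := u, k := v)) (S k) \<partial>D \<partial>D \<partial>Dn)
      = (\<integral>S. \<integral>u. (\<lambda>T y. \<integral>v. L (T(k := v)) y * L (T(k := v)) (T k) \<partial>D) (S(j := u)) (S j) \<partial>D \<partial>Dn)"
    using jk by simp
  also have "\<dots> = (\<integral>S. \<integral>u. \<integral>v. L (S(k := v)) u * L (S(k := v)) (S k) \<partial>D \<partial>D \<partial>Dn)"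
    by (rule integral_resample_coordinate[OF j, where C="M * M"])
      (measurable, rule D.abs_integral_le_bound, simp)
  also have "\<dots> = (\<integral>S. \<integral>v. (\<lambda>T w. mean_loss T * L T w) (S(k := v)) (S k) \<partial>D \<partial>Dn)"
    by (subst integral_nested_swap_inner[where C="M * M"]) (auto simp: mean_loss_def)
  also have "\<dots> = (\<integral>S. \<integral>v. mean_loss S * L S v \<partial>D \<partial>Dn)"
    by (rule integral_resample_coordinate[OF k, where C="M * M"]) measurable
  finally show ?thesis by (simp add: mean_loss_def)
qed

lemma loss_diff_resample_other_le:
  "(\<integral>S. \<integral>u. \<integral>v. \<bar>L (S(j := u)) (S j) - L (S(j := u, k := v)) (S j)\<bar> \<partial>D \<partial>D \<partial>Dn) \<le> 2 * sensitivity k"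
proof -
  have "(\<integral>S. \<integral>u. \<integral>v. \<bar>L (S(j := u)) (S j) - L (S(j := u, k := v)) (S j)\<bar> \<partial>D \<partial>D \<partial>Dn)
      = (\<integral>S. \<integral>u. \<integral>v. \<bar>L S u - L (S(k := v)) u\<bar> \<partial>D \<partial>D \<partial>Dn)"
    by (rule integral_resample_coordinate[OF j, where C=M])
      (measurable, rule D.abs_integral_le_bound, simp)
  also have "\<dots> = (\<integral>S. \<integral>v. \<integral>u. \<bar>L S u - L (S(k := v)) u\<bar> \<partial>D \<partial>D \<partial>Dn)"
    by (rule integral_nested_swap_inner[where C=M]) auto
  also have "\<dots> \<le> 2 * sensitivity k" by (rule loss_diff_resample_le[OF k])
  finally show ?thesis .
qed

lemma loss_diff_resample_two_le:
  "(\<integral>S. \<integral>u. \<integral>v. \<bar>L S (S j) - L (S(j := u, k := v)) (S j)\<bar> \<partial>D \<partial>D \<partial>Dn)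
    \<le> sensitivity j + 2 * sensitivity k"
proof -
  have "(\<integral>S. \<integral>u. \<integral>v. \<bar>L S (S j) - L (S(j := u, k := v)) (S j)\<bar> \<partial>D \<partial>D \<partial>Dn)
      \<le> (\<integral>S. \<integral>u. \<integral>v. \<bar>L S (S j) - L (S(j := u)) (S j)\<bar>
        + \<bar>L (S(j := u)) (S j) - L (S(j := u, k := v)) (S j)\<bar> \<partial>D \<partial>D \<partial>Dn)"
    by (rule integral_nested_triple_mono[where C=M and C'="2 * M"]) auto
  also have "\<dots> = sensitivity j
      + (\<integral>S. \<integral>u. \<integral>v. \<bar>L (S(j := u)) (S j) - L (S(j := u, k := v)) (S j)\<bar> \<partial>D \<partial>D \<partial>Dn)"
    by (subst integral_nested_triple_add[where C=M and C'=M]) (auto simp: sensitivity_def D.prob_space)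
  finally show ?thesis using loss_diff_resample_other_le by linarith
qed

end

declare indices_in [simp del]

text \<open>Both factors are compared with the sample S' in which z_j and z_k are replaced by fresh
  points; for S' both points are test points, so the product has mean E[R(S)^2].\<close>

lemma loss_product_le:
  assumes j: "j < n" and k: "k < n" and jk: "j \<noteq> k"
  shows "(\<integral>S. L S (S j) * L S (S k) \<partial>Dn)
    \<le> (\<integral>S. mean_loss S * mean_loss S \<partial>Dn) + 3 * M * (sensitivity j + sensitivity k)"
proof -
  have [simp]: "j \<in> {..<n}" "k \<in> {..<n}" "j < n" "k < n" using j k by auto
  define S' where "S' S u v = S(j := u, k := v)" for S :: "nat \<Rightarrow> 'z" and u v
  have [measurable]: "(\<lambda>x. S' (fst x) (fst (snd x)) (snd (snd x))) \<in> measurable (Dn \<Otimes>\<^sub>M (D \<Otimes>\<^sub>M D)) Dn"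
    unfolding S'_def by measurable
  have product_bound: "\<And>S u v. \<bar>L (S' S u v) (S j) * L (S' S u v) (S k)\<bar> \<le> M * M" by simp
  have weighted_bound: "\<And>S u v. \<bar>M * \<bar>L S (S j) - L (S' S u v) (S j)\<bar> + M * \<bar>L S (S k) - L (S' S u v) (S k)\<bar>\<bar>
      \<le> M * M + M * M"
    by (intro order_trans[OF abs_triangle_ineq] add_mono) (simp_all add: abs_mult M_nonneg mult_left_mono)
  have sum_bound: "\<And>S u v. \<bar>L (S' S u v) (S j) * L (S' S u v) (S k)
      + (M * \<bar>L S (S j) - L (S' S u v) (S j)\<bar> + M * \<bar>L S (S k) - L (S' S u v) (S k)\<bar>)\<bar>
      \<le> M * M + (M * M + M * M)"
    using product_bound weighted_bound by (meson abs_triangle_ineq add_mono order_trans)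
  have "(\<integral>S. L S (S j) * L S (S k) \<partial>Dn) = (\<integral>S. \<integral>u. \<integral>v. L S (S j) * L S (S k) \<partial>D \<partial>D \<partial>Dn)"
    by (simp add: D.prob_space)
  also have "\<dots> \<le> (\<integral>S. \<integral>u. \<integral>v. L (S' S u v) (S j) * L (S' S u v) (S k)
      + (M * \<bar>L S (S j) - L (S' S u v) (S j)\<bar> + M * \<bar>L S (S k) - L (S' S u v) (S k)\<bar>) \<partial>D \<partial>D \<partial>Dn)"
  proof (rule integral_nested_triple_mono[OF _ _ _ sum_bound])
    fix S u v
    have "\<bar>L S (S j) * L S (S k) - L (S' S u v) (S j) * L (S' S u v) (S k)\<bar>
        \<le> M * \<bar>L S (S j) - L (S' S u v) (S j)\<bar> + M * \<bar>L S (S k) - L (S' S u v) (S k)\<bar>"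
      by (rule abs_mult_diff_le) simp_all
    then show "L S (S j) * L S (S k) \<le> L (S' S u v) (S j) * L (S' S u v) (S k)
      + (M * \<bar>L S (S j) - L (S' S u v) (S j)\<bar> + M * \<bar>L S (S k) - L (S' S u v) (S k)\<bar>)"
      by (simp add: abs_le_iff)
  qed (measurable, rule abs_mult_le, measurable)
  also have "\<dots> = (\<integral>S. \<integral>u. \<integral>v. L (S' S u v) (S j) * L (S' S u v) (S k) \<partial>D \<partial>D \<partial>Dn)
      + (\<integral>S. \<integral>u. \<integral>v. M * \<bar>L S (S j) - L (S' S u v) (S j)\<bar> + M * \<bar>L S (S k) - L (S' S u v) (S k)\<bar> \<partial>D \<partial>D \<partial>Dn)"
    by (rule integral_nested_triple_add[OF _ product_bound _ weighted_bound]) measurable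
  also have "(\<integral>S. \<integral>u. \<integral>v. M * \<bar>L S (S j) - L (S' S u v) (S j)\<bar> + M * \<bar>L S (S k) - L (S' S u v) (S k)\<bar> \<partial>D \<partial>D \<partial>Dn)
      = M * (\<integral>S. \<integral>u. \<integral>v. \<bar>L S (S j) - L (S' S u v) (S j)\<bar> \<partial>D \<partial>D \<partial>Dn)
        + M * (\<integral>S. \<integral>u. \<integral>v. \<bar>L S (S k) - L (S' S u v) (S k)\<bar> \<partial>D \<partial>D \<partial>Dn)"
    by (subst integral_nested_triple_add[where C="M * M" and C'="M * M"])
      (simp_all add: abs_mult M_nonneg mult_left_mono)
  also have "(\<integral>S. \<integral>u. \<integral>v. \<bar>L S (S k) - L (S' S u v) (S k)\<bar> \<partial>D \<partial>D \<partial>Dn)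
      = (\<integral>S. \<integral>v. \<integral>u. \<bar>L S (S k) - L (S(k := v, j := u)) (S k)\<bar> \<partial>D \<partial>D \<partial>Dn)"
    using jk by (subst integral_nested_swap_inner[where C=M]) (auto simp: S'_def fun_upd_twist)
  also have "(\<integral>S. \<integral>u. \<integral>v. L (S' S u v) (S j) * L (S' S u v) (S k) \<partial>D \<partial>D \<partial>Dn)
      + (M * (\<integral>S. \<integral>u. \<integral>v. \<bar>L S (S j) - L (S' S u v) (S j)\<bar> \<partial>D \<partial>D \<partial>Dn)
        + M * (\<integral>S. \<integral>v. \<integral>u. \<bar>L S (S k) - L (S(k := v, j := u)) (S k)\<bar> \<partial>D \<partial>D \<partial>Dn))
      \<le> (\<integral>S. mean_loss S * mean_loss S \<partial>Dn)
        + (M * (sensitivity j + 2 * sensitivity k) + M * (sensitivity k + 2 * sensitivity j))"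
    unfolding S'_def integral_resample_two[OF j k jk]
    by (intro add_left_mono add_mono mult_left_mono M_nonneg loss_diff_resample_two_le j k jk jk[symmetric])
  finally show ?thesis by (simp add: algebra_simps)
qed
definition gap_term :: "nat \<Rightarrow> (nat \<Rightarrow> 'z) \<Rightarrow> real" where
  "gap_term i S = mean_loss S - L S (S i)"

lemma abs_gap_term_product_le: "\<bar>gap_term j S * gap_term k S\<bar> \<le> M * M"
  unfolding gap_term_def abs_mult by (rule mult_mono) (simp_all add: M_nonneg)

lemma gap_term_measurable [measurable]: "i < n \<Longrightarrow> gap_term i \<in> borel_measurable Dn"
  unfolding gap_term_def[abs_def] by measurable

lemma gap_term_product_le:
  assumes j: "j < n" and k: "k < n"
  shows "(\<integral>S. gap_term j S * gap_term k S \<partial>Dn)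
    \<le> (if j = k then M * M else 0) + 6 * M * (sensitivity j + sensitivity k)"
proof (cases "j = k")
  case True
  have "(\<integral>S. gap_term j S * gap_term k S \<partial>Dn) \<le> M * M"
    using Dn.abs_integral_le_bound[of "\<lambda>S. gap_term j S * gap_term k S", OF abs_gap_term_product_le]
    by linarith
  then show ?thesis
    using True mult_nonneg_nonneg[OF M_nonneg sensitivity_nonneg[of k]] by simp
next
  case False
  have [simp]: "j \<in> {..<n}" "k \<in> {..<n}" "j < n" "k < n" using j k by auto
  have "integrable Dn (\<lambda>S. mean_loss S * mean_loss S)"
    by (rule integrable_bounded[OF Dn.finite_measure_axioms, where C="M * M"], measurable, rule abs_mult_le)
  moreover have "integrable Dn (\<lambda>S. mean_loss S * L S (S i))" if "i \<in> {..<n}" for i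
    by (rule integrable_bounded[OF Dn.finite_measure_axioms, where C="M * M"]) (use that in measurable)
  moreover have "integrable Dn (\<lambda>S. L S (S j) * L S (S k))"
    by (rule integrable_bounded[OF Dn.finite_measure_axioms, where C="M * M"], measurable)
  ultimately have "(\<integral>S. gap_term j S * gap_term k S \<partial>Dn)
      = (\<integral>S. mean_loss S * mean_loss S \<partial>Dn) - (\<integral>S. mean_loss S * L S (S k) \<partial>Dn)
        - (\<integral>S. mean_loss S * L S (S j) \<partial>Dn) + (\<integral>S. L S (S j) * L S (S k) \<partial>Dn)"
    by (simp add: gap_term_def algebra_simps)
  also have "\<dots> \<le> 6 * M * (sensitivity j + sensitivity k)"
    using mean_loss_sq_le[OF j] mean_loss_sq_le[OF k] loss_product_le[OF j k False]
    by (simp add: algebra_simps)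
  finally show ?thesis using False by simp
qed

lemma gap_second_moment_le:
  assumes "0 < n"
  shows "(\<integral>S. (mean_loss S - (1 / real n) * (\<Sum>i<n. L S (S i)))\<^sup>2 \<partial>Dn)
    \<le> M\<^sup>2 / real n + 12 * M / real n * (\<Sum>i<n. sensitivity i)"
proof -
  have square: "(mean_loss S - (1 / real n) * (\<Sum>i<n. L S (S i)))\<^sup>2
      = (1 / real n)\<^sup>2 * (\<Sum>j<n. \<Sum>k<n. gap_term j S * gap_term k S)" for S
  proof -
    have "mean_loss S - (1 / real n) * (\<Sum>i<n. L S (S i)) = (1 / real n) * (\<Sum>i<n. gap_term i S)"
      using assms by (simp add: gap_term_def sum_subtractf field_simps)
    then show ?thesis by (simp add: power_mult_distrib power2_eq_square sum_product)
  qed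
  have integrable: "integrable Dn (\<lambda>S. gap_term j S * gap_term k S)" if "j < n" "k < n" for j k
    using that by (intro integrable_bounded[OF Dn.finite_measure_axioms, where C="M * M"])
      (simp_all add: abs_gap_term_product_le)
  have "(\<integral>S. (mean_loss S - (1 / real n) * (\<Sum>i<n. L S (S i)))\<^sup>2 \<partial>Dn)
      = (1 / real n)\<^sup>2 * (\<Sum>j<n. \<Sum>k<n. \<integral>S. gap_term j S * gap_term k S \<partial>Dn)"
  proof -
    have "(\<integral>S. (\<Sum>j<n. \<Sum>k<n. gap_term j S * gap_term k S) \<partial>Dn)
        = (\<Sum>j<n. \<integral>S. (\<Sum>k<n. gap_term j S * gap_term k S) \<partial>Dn)"
      using integrable by (intro Bochner_Integration.integral_sum Bochner_Integration.integrable_sum) auto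
    also have "\<dots> = (\<Sum>j<n. \<Sum>k<n. \<integral>S. gap_term j S * gap_term k S \<partial>Dn)"
      using integrable by (intro sum.cong refl Bochner_Integration.integral_sum) auto
    finally show ?thesis unfolding square by simp
  qed
  also have "\<dots> \<le> (1 / real n)\<^sup>2 * (\<Sum>j<n. \<Sum>k<n. (if j = k then M * M else 0)
      + 6 * M * (sensitivity j + sensitivity k))"
    by (intro mult_left_mono sum_mono gap_term_product_le) auto
  also have "\<dots> = M\<^sup>2 / real n + 12 * M / real n * (\<Sum>i<n. sensitivity i)"
    using assms
    by (simp add: sum.distrib sum_distrib_left sum.swap[of "\<lambda>j k. sensitivity k"] power2_eq_square
        field_simps)
  finally show ?thesis .
qed

end

locale learning_problem =
  fixes D :: "'z measure" and P :: "'p measure" and n :: nat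
    and loss :: "'h \<Rightarrow> 'z \<Rightarrow> real" and A :: "(nat \<Rightarrow> 'z) \<Rightarrow> 'p \<Rightarrow> 'h" and M :: real
  assumes prob_space_D: "prob_space D" and prob_space_P: "prob_space P"
    and loss_bounded: "\<And>h z. 0 \<le> loss h z \<and> loss h z \<le> M"
    and loss_measurable:
      "(\<lambda>(S, \<theta>, z). loss (A S \<theta>) z) \<in> borel_measurable (sample_measure n D \<Otimes>\<^sub>M P \<Otimes>\<^sub>M D)"
begin

abbreviation "Dn \<equiv> PiM {..<n} (\<lambda>_. D)"

sublocale D: prob_space D by (rule prob_space_D)
sublocale P: prob_space P by (rule prob_space_P)
sublocale Dn: prob_space Dn by (rule prob_space_PiM) (use prob_space_D in auto)
sublocale Dn_P: prob_space "Dn \<Otimes>\<^sub>M P" by (rule prob_space_pair) unfold_locales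
sublocale D_P: prob_space "D \<Otimes>\<^sub>M P" by (rule prob_space_pair) unfold_locales
sublocale pair_Dn_P: pair_sigma_finite Dn P ..
sublocale pair_D_P: pair_sigma_finite D P ..

lemma loss_measurable' [measurable (raw)]:
  "f \<in> measurable N Dn \<Longrightarrow> g \<in> measurable N P \<Longrightarrow> h \<in> measurable N D \<Longrightarrow>
   (\<lambda>x. loss (A (f x) (g x)) (h x)) \<in> borel_measurable N"
  using measurable_compose[of "\<lambda>x. (f x, g x, h x)" N, OF _ loss_measurable[unfolded sample_measure_def]]
  by simp

lemma update_measurable:
  "i < n \<Longrightarrow> f \<in> measurable N Dn \<Longrightarrow> h \<in> measurable N D \<Longrightarrow> (\<lambda>x. (f x)(i := h x)) \<in> measurable N Dn"
  by (intro measurable_fun_upd[where J="{..<n}"]) auto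

lemma M_nonneg: "0 \<le> M" using loss_bounded[of undefined undefined] by linarith

lemma bounded_sample_loss_at: "\<theta> \<in> space P \<Longrightarrow> bounded_sample_loss D n (\<lambda>S z. loss (A S \<theta>) z) M"
  by unfold_locales (use loss_bounded prob_space_D in \<open>auto simp: case_prod_beta'\<close>)

definition sensitivity_at :: "nat \<Rightarrow> 'p \<Rightarrow> real" where
  "sensitivity_at i \<theta> = (\<integral>S. \<integral>z. \<bar>loss (A S \<theta>) (S i) - loss (A (S(i := z)) \<theta>) (S i)\<bar> \<partial>D \<partial>Dn)"

lemma gen_gap_measurable [measurable]:
  "(\<lambda>x. gen_gap n D loss A (fst x) (snd x)) \<in> borel_measurable (Dn \<Otimes>\<^sub>M P)"
proof -
  have "(\<lambda>x. loss (A (fst x) (snd x)) (fst x i)) \<in> borel_measurable (Dn \<Otimes>\<^sub>M P)"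
    if "i \<in> {..<n}" for i
    using that by measurable
  then show ?thesis unfolding gen_gap_def risk_def emp_risk_def by measurable
qed

lemma gen_gap_measurable_at: "S \<in> space Dn \<Longrightarrow> gen_gap n D loss A S \<in> borel_measurable P"
proof -
  assume "S \<in> space Dn"
  then have "(\<lambda>\<theta>. (S, \<theta>)) \<in> measurable P (Dn \<Otimes>\<^sub>M P)" by measurable
  from measurable_compose[OF this gen_gap_measurable] show ?thesis by simp
qed

lemma abs_gen_gap_le: "0 < n \<Longrightarrow> \<bar>gen_gap n D loss A S \<theta>\<bar> \<le> M"
proof -
  assume "0 < n"
  have "0 \<le> risk D loss A S \<theta>" "risk D loss A S \<theta> \<le> M"
    using D.abs_integral_le_bound[of "loss (A S \<theta>)" M] loss_bounded
    by (auto simp: risk_def integral_nonneg_AE abs_le_iff)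
  moreover have "0 \<le> emp_risk n loss A S \<theta>" "emp_risk n loss A S \<theta> \<le> M"
    using sum_mono[of "{..<n}" "\<lambda>i. loss (A S \<theta>) (S i)" "\<lambda>_. M"] loss_bounded \<open>0 < n\<close>
    by (auto simp: emp_risk_def sum_nonneg field_simps)
  ultimately show ?thesis by (auto simp: gen_gap_def)
qed

lemma gen_gap_second_moment_at_le:
  assumes "\<theta> \<in> space P" and "0 < n"
  shows "(\<integral>S. (gen_gap n D loss A S \<theta>)\<^sup>2 \<partial>Dn) \<le> M\<^sup>2 / real n + 12 * M / real n * (\<Sum>i<n. sensitivity_at i \<theta>)"
proof -
  interpret \<theta>: bounded_sample_loss D n "\<lambda>S z. loss (A S \<theta>) z" M
    by (rule bounded_sample_loss_at[OF assms(1)])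
  have "gen_gap n D loss A S \<theta> = \<theta>.mean_loss S - (1 / real n) * (\<Sum>i<n. loss (A S \<theta>) (S i))" for S
    by (simp add: gen_gap_def risk_def emp_risk_def \<theta>.mean_loss_def)
  moreover have "\<theta>.sensitivity i = sensitivity_at i \<theta>" for i
    by (simp add: \<theta>.sensitivity_def sensitivity_at_def)
  ultimately show ?thesis using \<theta>.gap_second_moment_le[OF assms(2)] by simp
qed

lemma abs_loss_diff_le [simp]: "\<bar>loss h z - loss h' z'\<bar> \<le> M"
  using loss_bounded[of h z] loss_bounded[of h' z'] by (auto simp: abs_le_iff)

lemma integrable_resample_loss_diff:
  assumes "i < n"
  shows "integrable (Dn \<Otimes>\<^sub>M P)
    (\<lambda>(S, \<theta>). \<integral>z. \<bar>loss (A S \<theta>) (S i) - loss (A (S(i := z)) \<theta>) (S i)\<bar> \<partial>D)"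
proof -
  have [simp]: "i \<in> {..<n}" "i < n" using assms by simp_all
  note [measurable (raw)] = update_measurable[OF assms]
  have "(\<lambda>x. \<integral>z. \<bar>loss (A (fst x) (snd x)) (fst x i) - loss (A ((fst x)(i := z)) (snd x)) (fst x i)\<bar> \<partial>D)
      \<in> borel_measurable (Dn \<Otimes>\<^sub>M P)"
    by measurable
  then have "integrable (Dn \<Otimes>\<^sub>M P)
      (\<lambda>x. \<integral>z. \<bar>loss (A (fst x) (snd x)) (fst x i) - loss (A ((fst x)(i := z)) (snd x)) (fst x i)\<bar> \<partial>D)"
    by (rule integrable_bounded[OF Dn_P.finite_measure_axioms, where C=M])
      (rule D.abs_integral_le_bound, simp)
  then show ?thesis by (simp add: case_prod_beta')
qed

lemma integrable_sensitivity_at: "i < n \<Longrightarrow> integrable P (sensitivity_at i)"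
  using pair_Dn_P.integrable_snd[OF integrable_resample_loss_diff] by (simp add: sensitivity_at_def[abs_def])

lemma integral_sensitivity_at_le:
  assumes stable: "pointwise_hyp_stable n D P loss A \<beta>" and i: "i < n"
  shows "(\<integral>\<theta>. sensitivity_at i \<theta> \<partial>P) \<le> \<beta>"
proof -
  have [simp]: "i \<in> {..<n}" "i < n" using i by simp_all
  note [measurable (raw)] = update_measurable[OF i]
  have "(\<integral>\<theta>. sensitivity_at i \<theta> \<partial>P)
      = (\<integral>S. \<integral>\<theta>. \<integral>z. \<bar>loss (A S \<theta>) (S i) - loss (A (S(i := z)) \<theta>) (S i)\<bar> \<partial>D \<partial>P \<partial>Dn)"
    unfolding sensitivity_at_def by (rule pair_Dn_P.Fubini_integral[OF integrable_resample_loss_diff[OF i]])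
  also have "\<dots> = (\<integral>S. \<integral>z. \<integral>\<theta>. \<bar>loss (A S \<theta>) (S i) - loss (A (S(i := z)) \<theta>) (S i)\<bar> \<partial>P \<partial>D \<partial>Dn)"
  proof (rule Bochner_Integration.integral_cong[OF refl])
    fix S assume "S \<in> space Dn"
    then have [measurable]: "(\<lambda>x. S) \<in> measurable (D \<Otimes>\<^sub>M P) Dn" by simp
    have "integrable (D \<Otimes>\<^sub>M P) (\<lambda>x. \<bar>loss (A S (snd x)) (S i) - loss (A (S(i := fst x)) (snd x)) (S i)\<bar>)"
      by (rule integrable_bounded[OF D_P.finite_measure_axioms, where C=M]) measurable
    then have "integrable (D \<Otimes>\<^sub>M P) (\<lambda>(z, \<theta>). \<bar>loss (A S \<theta>) (S i) - loss (A (S(i := z)) \<theta>) (S i)\<bar>)"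
      by (simp add: case_prod_beta')
    from pair_D_P.Fubini_integral[OF this]
    show "(\<integral>\<theta>. \<integral>z. \<bar>loss (A S \<theta>) (S i) - loss (A (S(i := z)) \<theta>) (S i)\<bar> \<partial>D \<partial>P)
        = (\<integral>z. \<integral>\<theta>. \<bar>loss (A S \<theta>) (S i) - loss (A (S(i := z)) \<theta>) (S i)\<bar> \<partial>P \<partial>D)" .
  qed
  also have "\<dots> \<le> \<beta>"
    using stable i unfolding pointwise_hyp_stable_def sample_measure_def by blast
  finally show ?thesis .
qed

lemma gen_gap_sq_le: "0 < n \<Longrightarrow> (gen_gap n D loss A S \<theta>)\<^sup>2 \<le> M * M"
  using mult_mono[OF abs_gen_gap_le abs_gen_gap_le M_nonneg abs_ge_zero, of S \<theta> S \<theta>]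
  by (simp add: power2_eq_square)

definition prior_gap_moment :: "(nat \<Rightarrow> 'z) \<Rightarrow> real" where
  "prior_gap_moment S = (\<integral>\<theta>. (gen_gap n D loss A S \<theta>)\<^sup>2 \<partial>P)"

lemma prior_gap_moment_measurable [measurable]: "prior_gap_moment \<in> borel_measurable Dn"
proof -
  have "case_prod (\<lambda>S \<theta>. (gen_gap n D loss A S \<theta>)\<^sup>2) \<in> borel_measurable (Dn \<Otimes>\<^sub>M P)"
    by (simp add: case_prod_beta')
  from P.borel_measurable_lebesgue_integral[OF this] show ?thesis
    by (simp add: prior_gap_moment_def[abs_def])
qed

lemma prior_gap_moment_nonneg: "0 \<le> prior_gap_moment S"
  unfolding prior_gap_moment_def by (simp add: integral_nonneg_AE)

lemma integrable_prior_gap_moment: "0 < n \<Longrightarrow> integrable Dn prior_gap_moment"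
  by (rule integrable_bounded[OF Dn.finite_measure_axioms prior_gap_moment_measurable, where C="M * M"])
    (unfold prior_gap_moment_def, rule P.abs_integral_le_bound, simp add: gen_gap_sq_le)

lemma expectation_prior_gap_moment_le:
  assumes stable: "pointwise_hyp_stable n D P loss A \<beta>" and "0 < n"
  shows "(\<integral>S. prior_gap_moment S \<partial>Dn) \<le> M\<^sup>2 / real n + 12 * M * \<beta>"
proof -
  have "integrable (Dn \<Otimes>\<^sub>M P) (\<lambda>x. (gen_gap n D loss A (fst x) (snd x))\<^sup>2)"
    by (rule integrable_bounded[OF Dn_P.finite_measure_axioms, where C="M * M"])
      (simp_all add: gen_gap_sq_le \<open>0 < n\<close>)
  then have gap_sq: "integrable (Dn \<Otimes>\<^sub>M P) (\<lambda>(S, \<theta>). (gen_gap n D loss A S \<theta>)\<^sup>2)"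
    by (simp add: case_prod_beta')
  have sensitivity: "integrable P (sensitivity_at i)" if "i \<in> {..<n}" for i
    using that integrable_sensitivity_at by simp
  have "(\<integral>S. prior_gap_moment S \<partial>Dn) = (\<integral>\<theta>. (\<integral>S. (gen_gap n D loss A S \<theta>)\<^sup>2 \<partial>Dn) \<partial>P)"
    unfolding prior_gap_moment_def by (rule pair_Dn_P.Fubini_integral[OF gap_sq, symmetric])
  also have "\<dots> \<le> (\<integral>\<theta>. M\<^sup>2 / real n + 12 * M / real n * (\<Sum>i<n. sensitivity_at i \<theta>) \<partial>P)"
  proof (rule integral_mono)
    show "integrable P (\<lambda>\<theta>. \<integral>S. (gen_gap n D loss A S \<theta>)\<^sup>2 \<partial>Dn)"
      by (rule pair_Dn_P.integrable_snd[OF gap_sq])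
    show "integrable P (\<lambda>\<theta>. M\<^sup>2 / real n + 12 * M / real n * (\<Sum>i<n. sensitivity_at i \<theta>))"
      by (intro Bochner_Integration.integrable_add P.integrable_const
          Bochner_Integration.integrable_mult_right Bochner_Integration.integrable_sum sensitivity)
  qed (rule gen_gap_second_moment_at_le[OF _ \<open>0 < n\<close>])
  also have "\<dots> = M\<^sup>2 / real n + 12 * M / real n * (\<integral>\<theta>. (\<Sum>i<n. sensitivity_at i \<theta>) \<partial>P)"
    by (subst Bochner_Integration.integral_add)
      (auto intro!: Bochner_Integration.integrable_sum sensitivity simp: P.prob_space)
  also have "\<dots> = M\<^sup>2 / real n + 12 * M / real n * (\<Sum>i<n. \<integral>\<theta>. sensitivity_at i \<theta> \<partial>P)"
    using sensitivity by (simp add: Bochner_Integration.integral_sum)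
  also have "\<dots> \<le> M\<^sup>2 / real n + 12 * M / real n * (\<Sum>i<n. \<beta>)"
    using integral_sensitivity_at_le[OF stable] M_nonneg
    by (intro add_left_mono mult_left_mono sum_mono) auto
  also have "\<dots> = M\<^sup>2 / real n + 12 * M * \<beta>" using \<open>0 < n\<close> by simp
  finally show ?thesis .
qed

end

theorem theorem1:
  fixes D :: "'z measure" and P :: "'p measure"
    and loss :: "'h \<Rightarrow> 'z \<Rightarrow> real" and A :: "(nat \<Rightarrow> 'z) \<Rightarrow> 'p \<Rightarrow> 'h"
    and M \<beta> \<delta> :: real and n :: nat
  assumes D: "prob_space D"
    and P: "prob_space P"
    and loss_bounded: "\<And>h z. 0 \<le> loss h z \<and> loss h z \<le> M"
    and meas: "(\<lambda>(S, \<theta>, z). loss (A S \<theta>) z)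
               \<in> borel_measurable (sample_measure n D \<Otimes>\<^sub>M P \<Otimes>\<^sub>M D)"
    and stable: "pointwise_hyp_stable n D P loss A \<beta>"
    and n: "n \<ge> 1"
    and \<delta>: "0 < \<delta>" "\<delta> < 1"
  shows "\<exists>E \<in> sets (sample_measure n D).
           measure (sample_measure n D) E \<ge> 1 - \<delta> \<and>
           (\<forall>S \<in> E. \<forall>Q. prob_space Q \<and> sets Q = sets P \<and> chi_square Q P < \<infinity> \<longrightarrow>
              gen_gap_post n D loss A S Q
                \<le> sqrt (((real_of_ereal (chi_square Q P) + 1) / \<delta>)
                         * (2 * M\<^sup>2 / real n + 12 * M * \<beta>)))"
proof -
  interpret learning_problem D P n loss A M
    by (rule learning_problem.intro) (use D P loss_bounded meas in auto)
  have "0 < n" using n by simp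
  define B where "B = 2 * M\<^sup>2 / real n + 12 * M * \<beta>"
  define E where "E = {S \<in> space Dn. prior_gap_moment S \<le> B / \<delta>}"
  have "0 \<le> M\<^sup>2 / real n" by simp
  then have "(\<integral>S. prior_gap_moment S \<partial>Dn) \<le> B"
    using expectation_prior_gap_moment_le[OF stable \<open>0 < n\<close>] unfolding B_def by linarith
  then have "1 - \<delta> \<le> measure Dn E"
    unfolding E_def
    by (intro Dn.Markov_lower_prob integrable_prior_gap_moment prior_gap_moment_nonneg \<open>0 < n\<close> \<delta>(1))
  moreover have "gen_gap_post n D loss A S Q \<le> sqrt ((real_of_ereal (chi_square Q P) + 1) / \<delta> * B)"
    if "S \<in> E" "prob_space Q" "sets Q = sets P" "chi_square Q P < \<infinity>" for S Q
  proof -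
    have "S \<in> space Dn" "prior_gap_moment S \<le> B / \<delta>" using \<open>S \<in> E\<close> by (auto simp: E_def)
    then have "(\<integral>\<theta>. gen_gap n D loss A S \<theta> \<partial>Q) \<le> sqrt ((real_of_ereal (chi_square Q P) + 1) * (B / \<delta>))"
      using that abs_gen_gap_le[OF \<open>0 < n\<close>] gen_gap_measurable_at
      by (intro chi_square_change_of_measure[OF P]) (auto simp: prior_gap_moment_def)
    then show ?thesis by (simp add: gen_gap_post_def)
  qed
  moreover have "E \<in> sets Dn" unfolding E_def by measurable
  ultimately show ?thesis unfolding sample_measure_def B_def by blast
qed

end
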